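(* Let $N$ be an even positive integer and set Planck's constant $h=2\pi\hbar=1/N$. Let $F=(E_x+X^{-1/2}O_x)(B+Y^{-1}T)S$ be the operator described in the context. Then for every $m\in\mathbb{Z}$, $XF\Phi_m=F\Phi_m$ and $YF\Phi_m=F\Phi_m$; that is, $F$ maps the space $\mathcal{H}_\hbar(0)$ of (generalized) joint eigenvectors of $X$ and $Y$ with eigenvalue $1$ into itself.
   Context: $\widehat x$ is multiplication by $x$, $\widehat p=(\hbar/i)d/dx$. For real $s$, $X^{s}=e^{is\widehat{x}/\hbar}$, $Y^{s}=e^{is\widehat{p}/\hbar}$ (for $h=1/N$, $X=U^N$, $Y=V^N$ with $U=e^{2\pi i\widehat x}$, $V=e^{2\pi i\widehat p}$). $S=\exp\!\big(-\tfrac{i\log 2}{2\hbar}(\widehat{x}\widehat{p}+\widehat{p}\widehat{x})\big)$. $E_x$, $O_x$ are multiplication by the indicators of $[0,1)+2\mathbb{Z}$, $[1,2)+2\mathbb{Z}$; $B$, $T$ are the spectral projections of $\widehat p$ onto $[0,1/2)+\mathbb{Z}$, $[1/2,1)+\mathbb{Z}$. $\Phi_m=\Phi_m^{(0,0)}=N^{-1/2}\sum_{k\in\mathbb{Z}}\delta\big(x-\tfrac{m}{N}-k\big)$ (periodic $\delta$-comb). *)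

theory Defs
  imports Complex_Main
begin

text \<open>Model: generalized functions on the line that are (formal, locally finite)
  linear combinations of Dirac masses, represented by their coefficient function
  u :: real => complex, i.e. u stands for  sum_y u(y) delta(x - y).
  Planck's constant h = 2 pi hbar = 1/N.\<close>

type_synonym dm = "real \<Rightarrow> complex"

definition hbar :: "nat \<Rightarrow> real" where
  "hbar N = 1 / (2 * pi * real N)"

definition Xpow :: "nat \<Rightarrow> real \<Rightarrow> dm \<Rightarrow> dm" where
  "Xpow N s u = (\<lambda>y. cis (s * y / hbar N) * u y)"

text \<open>Y^s = exp(i s p / hbar) = exp(s d/dx): (Y^s f)(x) = f(x + s);
  on Dirac masses delta(x - y) maps to delta(x - (y - s)).\<close>
definition Ypow :: "real \<Rightarrow> dm \<Rightarrow> dm" where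
  "Ypow s u = (\<lambda>y. u (y + s))"

text \<open>S = exp(-(i log 2/(2 hbar))(xp+px)) acts as (S f)(x) = 2^(-1/2) f(x/2);
  on Dirac masses delta(x - y) maps to sqrt 2 * delta(x - 2y).\<close>
definition Sdil :: "dm \<Rightarrow> dm" where
  "Sdil u = (\<lambda>z. complex_of_real (sqrt 2) * u (z / 2))"

text \<open>E_x, O_x: multiplication by indicators of [0,1)+2Z and [1,2)+2Z.\<close>
definition Ex :: "dm \<Rightarrow> dm" where
  "Ex u = (\<lambda>y. if frac (y / 2) < 1 / 2 then u y else 0)"

definition Ox :: "dm \<Rightarrow> dm" where
  "Ox u = (\<lambda>y. if frac (y / 2) \<ge> 1 / 2 then u y else 0)"

text \<open>2-periodic Dirac combs with finitely many masses per period, and their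
  Fourier coefficients w.r.t. the modes exp(i pi j x):
  u = sum_j four2 u j * exp(i pi j x).\<close>
definition per2 :: "dm \<Rightarrow> bool" where
  "per2 u \<longleftrightarrow> (\<forall>y. u (y + 2) = u y)"

definition supp2 :: "dm \<Rightarrow> real set" where
  "supp2 u = {y. 0 \<le> y \<and> y < 2 \<and> u y \<noteq> 0}"

definition four2 :: "dm \<Rightarrow> int \<Rightarrow> complex" where
  "four2 u j = (1 / 2) * (\<Sum>y\<in>supp2 u. u y * cis (- pi * real_of_int j * y))"

text \<open>Eigenvalue of p = (hbar/i) d/dx on the mode exp(i pi j x).\<close>
definition p_eig :: "nat \<Rightarrow> int \<Rightarrow> real" where
  "p_eig N j = hbar N * pi * real_of_int j"

text \<open>Spectral projections B (p in [0,1/2)+Z) and T (p in [1/2,1)+Z), acting on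
  2-periodic Dirac combs (via their Fourier series).\<close>
definition Bproj :: "nat \<Rightarrow> dm \<Rightarrow> dm" where
  "Bproj N u = (THE v. per2 v \<and> finite (supp2 v) \<and>
      (\<forall>j. four2 v j = (if frac (p_eig N j) < 1 / 2 then four2 u j else 0)))"

definition Tproj :: "nat \<Rightarrow> dm \<Rightarrow> dm" where
  "Tproj N u = (THE v. per2 v \<and> finite (supp2 v) \<and>
      (\<forall>j. four2 v j = (if frac (p_eig N j) \<ge> 1 / 2 then four2 u j else 0)))"

definition Fop :: "nat \<Rightarrow> dm \<Rightarrow> dm" where
  "Fop N u = (let w = Sdil u;
                  v = (\<lambda>y. Bproj N w y + Ypow (-1) (Tproj N w) y)
              in (\<lambda>y. Ex v y + Xpow N (-1 / 2) (Ox v) y))"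

definition Phi :: "nat \<Rightarrow> int \<Rightarrow> dm" where
  "Phi N m = (\<lambda>y. if (\<exists>k::int. y = real_of_int m / real N + real_of_int k)
                  then complex_of_real (1 / sqrt (real N)) else 0)"

end

theory Submission
  imports Defs
begin

text \<open>
  The dilation \<open>S\<close> turns \<open>\<Phi>\<^sub>m\<close> into a 2-periodic Dirac comb with one mass per period,
  at \<open>a = 2m/N\<close>; its Fourier coefficient on the mode \<open>exp(i\<pi>jx)\<close> is \<open>c exp(-i\<pi>ja)\<close>, and \<open>p\<close>
  acts on that mode by \<open>j/2N\<close>, so \<open>B\<close> and \<open>T\<close> keep the modes with \<open>j mod 2N\<close> in \<open>[0,N)\<close>
  resp. \<open>[N,2N)\<close>. Discrete Fourier inversion on the lattice \<open>\<int>/N\<close> exhibits combs with exactly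
  these coefficients, and a Vandermonde argument shows that a finite 2-periodic comb is determined
  by its coefficients, so \<open>B S \<Phi>\<^sub>m\<close> and \<open>T S \<Phi>\<^sub>m\<close> are these explicit lattice combs. Shifting
  all frequencies by \<open>N\<close> multiplies a lattice comb by \<open>\<sigma>(x) = exp(-i\<pi>Nx)\<close>, hence
  \<open>T S \<Phi>\<^sub>m = \<sigma> \<cdot> B S \<Phi>\<^sub>m\<close>, and \<open>v = (B + Y\<^sup>-\<^sup>1 T) S \<Phi>\<^sub>m\<close> satisfies \<open>v(x+1) = \<sigma>(x) v(x)\<close>.
  For even \<open>N\<close> the sign \<open>\<sigma>\<close> has period 1 and squares to 1 on \<open>\<int>/N\<close>, so the parity-dependent
  twist \<open>E\<^sub>x + X\<^sup>-\<^sup>1\<^sup>/\<^sup>2 O\<^sub>x = E\<^sub>x + \<sigma> O\<^sub>x\<close> makes \<open>F \<Phi>\<^sub>m\<close> 1-periodic, i.e. \<open>Y\<close>-invariant.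
  \<open>X\<close>-invariance holds because \<open>F \<Phi>\<^sub>m\<close> lives on \<open>\<int>/N\<close>, where \<open>exp(2\<pi>iNx) = 1\<close>.
\<close>

lemma cis_eq_cis_iff: "cis x = cis y \<longleftrightarrow> (\<exists>k::int. x - y = 2 * pi * of_int k)"
proof -
  have "cis x = cis y \<longleftrightarrow> cis (x - y) = 1"
    by (simp add: cis_divide[symmetric])
  also have "\<dots> \<longleftrightarrow> cos (x - y) = 1"
    using cos_one_sin_zero by (auto simp: complex_eq_iff)
  also have "\<dots> \<longleftrightarrow> (\<exists>k::int. x - y = 2 * pi * of_int k)"
    by (simp add: cos_one_2pi_int mult_ac)
  finally show ?thesis .
qed

lemma cis_eq_cisI: "x - y = 2 * pi * of_int k \<Longrightarrow> cis x = cis y"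
  using cis_eq_cis_iff by blast

lemma inj_on_cis_minus_pi: "inj_on (\<lambda>y. cis (- pi * y)) {0..<2}"
proof (rule inj_onI)
  fix y y' :: real
  assume "y \<in> {0..<2}" "y' \<in> {0..<2}" "cis (- pi * y) = cis (- pi * y')"
  then obtain k :: int where "- pi * y - - pi * y' = 2 * pi * of_int k"
    by (auto simp: cis_eq_cis_iff)
  hence "pi * (y' - y) = pi * (2 * of_int k)" by (simp add: algebra_simps)
  hence k: "y' - y = 2 * of_int k" by simp
  with \<open>y \<in> {0..<2}\<close> \<open>y' \<in> {0..<2}\<close> have "k = 0" by auto
  thus "y = y'" using k by simp
qed

lemma sum_powers_eq_0_imp_coeffs_0:
  fixes z c :: "'a \<Rightarrow> 'b :: idom"
  assumes "finite S" "inj_on z S" "\<And>n::nat. (\<Sum>y\<in>S. c y * z y ^ n) = 0"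
  shows "\<forall>y\<in>S. c y = 0"
  using assms
proof (induction S arbitrary: c rule: finite_induct)
  case empty
  thus ?case by simp
next
  case (insert a S)
  have sum_S: "(\<Sum>y\<in>S. c y * z y ^ n) = - (c a * z a ^ n)" for n
    using insert.prems(2)[of n] insert.hyps by (simp add: add_eq_0_iff)
  \<comment> \<open>the coefficients \<open>c y * (z y - z a)\<close> satisfy the hypothesis on \<open>S\<close>\<close>
  have "(\<Sum>y\<in>S. (c y * (z y - z a)) * z y ^ n) = 0" for n
  proof -
    have "(\<Sum>y\<in>S. (c y * (z y - z a)) * z y ^ n)
        = (\<Sum>y\<in>S. c y * z y ^ Suc n) - z a * (\<Sum>y\<in>S. c y * z y ^ n)"
      by (simp add: sum_distrib_left sum_subtractf algebra_simps)
    thus ?thesis by (simp only: sum_S) (simp add: algebra_simps)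
  qed
  moreover have "inj_on z S" using insert.prems(1) by auto
  ultimately have "\<forall>y\<in>S. c y * (z y - z a) = 0" by (rule insert.IH[rotated])
  moreover have "\<forall>y\<in>S. z y \<noteq> z a" using insert.prems(1) insert.hyps by (auto simp: inj_on_def)
  ultimately have "\<forall>y\<in>S. c y = 0" by simp
  moreover from this have "c a = 0" using sum_S[of 0] by simp
  ultimately show ?case by simp
qed

lemma sum_cis_root_of_unity_powers:
  assumes "n > 0"
  shows "(\<Sum>k<n. cis (2 * pi * of_int d / real n) ^ k) = (if int n dvd d then of_nat n else 0)"
proof -
  define \<omega> where "\<omega> = cis (2 * pi * of_int d / real n)"
  have scaled: "2 * pi * of_int d / real n = 2 * pi * of_int k \<longleftrightarrow> d = int n * k" for k :: int
  proof -
    have "2 * pi * of_int d / real n = 2 * pi * of_int k \<longleftrightarrow> of_int d = (of_int (int n * k) :: real)"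
      using assms by (simp add: field_simps)
    thus ?thesis by (simp only: of_int_eq_iff)
  qed
  have one_iff: "\<omega> = 1 \<longleftrightarrow> int n dvd d"
    unfolding \<omega>_def using cis_eq_cis_iff[of _ 0] by (simp add: scaled dvd_def)
  have "\<omega> ^ n = 1"
    using assms by (simp add: \<omega>_def DeMoivre)
  hence "\<omega> \<noteq> 1 \<Longrightarrow> (\<Sum>k<n. \<omega> ^ k) = 0"
    by (simp add: sum_gp_strict)
  then show ?thesis
    unfolding \<omega>_def[symmetric] one_iff[symmetric]
    by (cases "\<omega> = 1") simp_all
qed

lemma per2_add_of_int:
  assumes "per2 u"
  shows "u (y + 2 * of_int k) = u y"
proof -
  have shift_nat: "u (x + 2 * of_nat n) = u x" for x n
  proof (induction n)
    case (Suc n)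
    have "u (x + 2 * of_nat (Suc n)) = u (x + 2 * of_nat n + 2)" by (simp add: algebra_simps)
    also have "\<dots> = u (x + 2 * of_nat n)" using assms by (simp add: per2_def)
    finally show ?case using Suc.IH by simp
  qed simp
  show ?thesis
  proof (cases "k \<ge> 0")
    case True
    thus ?thesis using shift_nat[of y "nat k"] by simp
  next
    case False
    thus ?thesis using shift_nat[of "y + 2 * of_int k" "nat (- k)"] by simp
  qed
qed

lemma per2_eqI:
  assumes "per2 u" "per2 v" "\<And>y. 0 \<le> y \<Longrightarrow> y < 2 \<Longrightarrow> u y = v y"
  shows "u = v"
proof
  fix y :: real
  define k where "k = \<lfloor>y / 2\<rfloor>"
  have "0 \<le> y - 2 * of_int k" "y - 2 * of_int k < 2"
    using floor_divide_lower[of 2 y] floor_divide_upper[of 2 y] by (auto simp: k_def algebra_simps)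
  hence "u (y - 2 * of_int k) = v (y - 2 * of_int k)" by (rule assms(3))
  moreover have "w (y - 2 * of_int k) = w y" if "per2 w" for w
    using per2_add_of_int[OF that, of "y - 2 * of_int k" k] by simp
  ultimately show "u y = v y" using assms(1,2) by metis
qed

lemma four2_eq_sum_superset:
  assumes "finite D" "supp2 u \<subseteq> D" "D \<subseteq> {0..<2}"
  shows "four2 u j = 1 / 2 * (\<Sum>y\<in>D. u y * cis (- pi * of_int j * y))"
  unfolding four2_def using assms
  by (intro arg_cong[where f = "\<lambda>s. 1 / 2 * s"] sum.mono_neutral_left) (auto simp: supp2_def)

lemma per2_four2_eqI:
  assumes "per2 u" "per2 v" "finite (supp2 u)" "finite (supp2 v)"
    and four2_eq: "\<And>j. four2 u j = four2 v j"
  shows "u = v"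
proof -
  define D where "D = supp2 u \<union> supp2 v"
  have D: "finite D" "D \<subseteq> {0..<2}" "supp2 u \<subseteq> D" "supp2 v \<subseteq> D"
    using assms(3,4) by (auto simp: D_def supp2_def)
  have moments: "(\<Sum>y\<in>D. (u y - v y) * cis (- pi * y) ^ n) = 0" for n :: nat
  proof -
    have four2_D: "(\<Sum>y\<in>D. w y * cis (- pi * of_int (int n) * y)) = 2 * four2 w (int n)"
      if "supp2 w \<subseteq> D" for w
      by (subst four2_eq_sum_superset[OF D(1) that D(2)]) simp
    have "cis (- pi * y) ^ n = cis (- pi * of_int (int n) * y)" for y
      by (simp add: DeMoivre mult_ac)
    hence "(\<Sum>y\<in>D. (u y - v y) * cis (- pi * y) ^ n)
        = (\<Sum>y\<in>D. u y * cis (- pi * of_int (int n) * y)) - (\<Sum>y\<in>D. v y * cis (- pi * of_int (int n) * y))"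
      by (simp only: left_diff_distrib sum_subtractf)
    also have "\<dots> = 2 * four2 u (int n) - 2 * four2 v (int n)"
      by (simp only: four2_D[OF D(3)] four2_D[OF D(4)])
    finally show ?thesis by (simp add: four2_eq)
  qed
  have on_D: "\<forall>y\<in>D. u y - v y = 0"
    by (rule sum_powers_eq_0_imp_coeffs_0[OF D(1) inj_on_subset[OF inj_on_cis_minus_pi D(2)] moments])
  show ?thesis
  proof (rule per2_eqI[OF assms(1,2)])
    fix y :: real
    assume "0 \<le> y" "y < 2"
    show "u y = v y"
    proof (cases "y \<in> D")
      case False
      with \<open>0 \<le> y\<close> \<open>y < 2\<close> show ?thesis by (simp add: D_def supp2_def)
    qed (use on_D in simp)
  qed
qed

lemma the_per2_four2_eq:
  assumes "per2 v" "finite (supp2 v)" "\<And>j. four2 v j = f j"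
  shows "(THE v. per2 v \<and> finite (supp2 v) \<and> (\<forall>j. four2 v j = f j)) = v"
  using assms by (intro the_equality) (auto intro: per2_four2_eqI)

definition lattice :: "nat \<Rightarrow> real set" where
  "lattice N = {of_int k / real N | k. True}"

lemma lattice_add_of_int_iff:
  assumes "N > 0"
  shows "y + of_int t \<in> lattice N \<longleftrightarrow> y \<in> lattice N"
proof
  assume "y + of_int t \<in> lattice N"
  then obtain k where "y + of_int t = of_int k / real N" by (auto simp: lattice_def)
  hence "y = of_int (k - t * int N) / real N" using assms by (simp add: field_simps)
  thus "y \<in> lattice N" unfolding lattice_def by blast
next
  assume "y \<in> lattice N"
  then obtain k where "y = of_int k / real N" by (auto simp: lattice_def)
  hence "y + of_int t = of_int (k + t * int N) / real N" using assms by (simp add: field_simps)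
  thus "y + of_int t \<in> lattice N" unfolding lattice_def by blast
qed

lemma supp2_subset_lattice:
  assumes "N > 0" and supp: "\<And>y. u y \<noteq> 0 \<Longrightarrow> y \<in> lattice N"
  shows "supp2 u \<subseteq> (\<lambda>k. real k / real N) ` {..<2 * N}"
proof
  fix y assume "y \<in> supp2 u"
  then obtain k :: int where y: "y = of_int k / real N" "0 \<le> y" "y < 2"
    using supp by (auto simp: supp2_def lattice_def)
  hence "0 \<le> k" "k < 2 * int N"
    using assms(1) by (simp_all add: zero_le_divide_iff divide_less_eq)
  thus "y \<in> (\<lambda>k. real k / real N) ` {..<2 * N}"
    using y(1) by (intro image_eqI[of _ _ "nat k"]) auto
qed

lemma four2_lattice_supported:
  assumes "N > 0" and "\<And>y. u y \<noteq> 0 \<Longrightarrow> y \<in> lattice N"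
  shows "four2 u j = 1 / 2 * (\<Sum>k<2 * N. u (real k / real N) * cis (- pi * of_int j * real k / real N))"
proof -
  have "inj_on (\<lambda>k. real k / real N) {..<2 * N}"
    using assms(1) by (auto simp: inj_on_def)
  moreover have "(\<lambda>k. real k / real N) ` {..<2 * N} \<subseteq> {0..<2}"
    using assms(1) by (auto simp: field_simps)
  ultimately show ?thesis
    using four2_eq_sum_superset[OF _ supp2_subset_lattice[OF assms]]
    by (simp add: sum.reindex)
qed

definition dirac_comb2 :: "complex \<Rightarrow> real \<Rightarrow> dm" where
  "dirac_comb2 c a = (\<lambda>y. if (y - a) / 2 \<in> \<int> then c else 0)"

lemma supp2_dirac_comb2:
  assumes "c \<noteq> 0"
  shows "supp2 (dirac_comb2 c a) = {2 * frac (a / 2)}"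
proof -
  have "(y - a) / 2 \<in> \<int> \<and> 0 \<le> y \<and> y < 2 \<longleftrightarrow> y = 2 * frac (a / 2)" for y
  proof -
    have "(y - a) / 2 = - (a / 2 - y / 2)" by (simp add: field_simps)
    hence "(y - a) / 2 \<in> \<int> \<longleftrightarrow> a / 2 - y / 2 \<in> \<int>" by (simp only: minus_in_Ints_iff)
    thus ?thesis using frac_unique_iff[of "a / 2" "y / 2"] by auto
  qed
  thus ?thesis using assms by (auto simp: supp2_def dirac_comb2_def)
qed

lemma four2_dirac_comb2: "four2 (dirac_comb2 c a) j = c / 2 * cis (- pi * of_int j * a)"
proof (cases "c = 0")
  case True
  thus ?thesis by (simp add: four2_def supp2_def dirac_comb2_def)
next
  case False
  have "cis (- pi * of_int j * (2 * frac (a / 2))) = cis (- pi * of_int j * a)"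
    by (rule cis_eq_cisI[of _ _ "j * \<lfloor>a / 2\<rfloor>"]) (simp add: frac_def algebra_simps)
  moreover have "(2 * frac (a / 2) - a) / 2 \<in> \<int>"
    by (simp add: frac_def diff_divide_distrib)
  ultimately show ?thesis
    unfolding four2_def supp2_dirac_comb2[OF False] by (simp add: dirac_comb2_def)
qed

lemma Sdil_Phi_eq_dirac_comb2:
  "Sdil (Phi N m) = dirac_comb2 (of_real (sqrt 2 / sqrt (real N))) (2 * of_int m / real N)"
proof
  fix z
  have "(\<exists>k::int. z / 2 = of_int m / real N + of_int k) \<longleftrightarrow> (z - 2 * of_int m / real N) / 2 \<in> \<int>"
    by (auto simp: Ints_def algebra_simps diff_divide_distrib)
  thus "Sdil (Phi N m) z = dirac_comb2 (of_real (sqrt 2 / sqrt (real N))) (2 * of_int m / real N) z"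
    by (simp add: Sdil_def Phi_def dirac_comb2_def)
qed

text \<open>A trigonometric polynomial with frequencies in \<open>L\<close>, sampled on the lattice; these combs
  realise the spectral pieces of \<open>dirac_comb2\<close>.\<close>
definition mode_comb :: "nat \<Rightarrow> complex \<Rightarrow> real \<Rightarrow> nat set \<Rightarrow> dm" where
  "mode_comb N c a L =
     (\<lambda>y. if y \<in> lattice N then c / of_nat N * (\<Sum>l\<in>L. cis (pi * real l * (y - a))) else 0)"

lemma mode_comb_supported: "mode_comb N c a L y \<noteq> 0 \<Longrightarrow> y \<in> lattice N"
  by (auto simp: mode_comb_def split: if_splits)

lemma per2_mode_comb:
  assumes "N > 0"
  shows "per2 (mode_comb N c a L)"
proof -
  have "cis (pi * real l * (y + 2 - a)) = cis (pi * real l * (y - a))" for l y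
    by (rule cis_eq_cisI[of _ _ "int l"]) (simp add: algebra_simps)
  moreover have "y + 2 \<in> lattice N \<longleftrightarrow> y \<in> lattice N" for y
    using lattice_add_of_int_iff[OF assms, of y 2] by simp
  ultimately show ?thesis by (simp add: per2_def mode_comb_def)
qed

lemma finite_supp2_mode_comb: "N > 0 \<Longrightarrow> finite (supp2 (mode_comb N c a L))"
  by (rule finite_subset[OF supp2_subset_lattice]) (auto intro: mode_comb_supported)

lemma mode_comb_image_add:
  "mode_comb N c a ((\<lambda>l. l + d) ` L) y = cis (pi * real d * (y - a)) * mode_comb N c a L y"
proof -
  have "(\<Sum>l\<in>(\<lambda>l. l + d) ` L. cis (pi * real l * (y - a)))
      = cis (pi * real d * (y - a)) * (\<Sum>l\<in>L. cis (pi * real l * (y - a)))"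
    by (simp add: sum.reindex sum_distrib_left cis_mult algebra_simps)
  thus ?thesis by (simp add: mode_comb_def)
qed

lemma real_div_in_lattice: "real k / real N \<in> lattice N"
  unfolding lattice_def by (intro CollectI exI[of _ "int k"]) simp

lemma sum_cis_powers_residue:
  assumes "N > 0" "l < 2 * N"
  shows "(\<Sum>k<2 * N. cis (2 * pi * of_int (int l - j) / real (2 * N)) ^ k)
       = (if l = nat (j mod int (2 * N)) then of_nat (2 * N) else 0)"
proof -
  have "int l mod int (2 * N) = int l"
    using assms(2) by simp
  hence "int (2 * N) dvd int l - j \<longleftrightarrow> int l = j mod int (2 * N)"
    by (simp add: mod_eq_dvd_iff[symmetric])
  also have "\<dots> \<longleftrightarrow> l = nat (j mod int (2 * N))"
    using assms(1) by auto
  finally show ?thesis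
    using sum_cis_root_of_unity_powers[of "2 * N" "int l - j"] assms(1) by simp
qed

lemma cis_residue_eq:
  assumes "N > 0" "real N * a \<in> \<int>"
  shows "cis (- pi * real (nat (j mod int (2 * N))) * a) = cis (- pi * of_int j * a)"
proof -
  obtain n :: int where n: "real N * a = of_int n"
    using assms(2) by (auto elim: Ints_cases)
  define q where "q = j div int (2 * N)"
  have "j - int (nat (j mod int (2 * N))) = int (2 * N) * q"
    using assms(1) by (simp add: q_def minus_mod_eq_mult_div)
  hence "of_int j - real (nat (j mod int (2 * N))) = 2 * real N * of_int q"
    by (metis of_int_diff of_int_mult of_int_of_nat_eq of_nat_mult of_nat_numeral)
  hence "- pi * real (nat (j mod int (2 * N))) * a - - pi * of_int j * a
      = 2 * pi * (real N * a) * of_int q"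
    by (simp add: algebra_simps)
  thus ?thesis
    by (intro cis_eq_cisI[of _ _ "n * q"]) (simp add: n)
qed

lemma four2_mode_comb:
  assumes "N > 0" "L \<subseteq> {..<2 * N}" "real N * a \<in> \<int>"
  shows "four2 (mode_comb N c a L) j
       = (if nat (j mod int (2 * N)) \<in> L then c * cis (- pi * of_int j * a) else 0)"
proof -
  define r where "r = nat (j mod int (2 * N))"
  define \<omega> where "\<omega> l = cis (2 * pi * of_int (int l - j) / real (2 * N))" for l
  have summand: "cis (pi * real l * (real k / real N - a)) * cis (- pi * of_int j * real k / real N)
      = cis (- pi * real l * a) * \<omega> l ^ k" for l k
    unfolding \<omega>_def DeMoivre cis_mult
    by (rule arg_cong[where f = cis]) (use assms(1) in \<open>simp add: field_simps\<close>)
  have "four2 (mode_comb N c a L) j = 1 / 2 * (\<Sum>k<2 * N.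
      mode_comb N c a L (real k / real N) * cis (- pi * of_int j * real k / real N))"
    by (rule four2_lattice_supported[OF assms(1) mode_comb_supported])
  also have "\<dots> = 1 / 2 * (\<Sum>k<2 * N. c / of_nat N * (\<Sum>l\<in>L. cis (- pi * real l * a) * \<omega> l ^ k))"
  proof -
    have "mode_comb N c a L (real k / real N) * cis (- pi * of_int j * real k / real N)
        = c / of_nat N * (\<Sum>l\<in>L. cis (pi * real l * (real k / real N - a))
            * cis (- pi * of_int j * real k / real N))" for k
      by (simp only: mode_comb_def real_div_in_lattice if_True mult.assoc[of "c / of_nat N"]
          sum_distrib_right)
    thus ?thesis by (simp only: summand)
  qed
  also have "\<dots> = 1 / 2 * (c / of_nat N * (\<Sum>k<2 * N. \<Sum>l\<in>L. cis (- pi * real l * a) * \<omega> l ^ k))"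
    by (simp only: sum_distrib_left)
  also have "\<dots> = c / of_nat (2 * N) * (\<Sum>l\<in>L. \<Sum>k<2 * N. cis (- pi * real l * a) * \<omega> l ^ k)"
    by (subst sum.swap) simp
  also have "\<dots> = c / of_nat (2 * N) * (\<Sum>l\<in>L. cis (- pi * real l * a) * (\<Sum>k<2 * N. \<omega> l ^ k))"
    by (simp only: sum_distrib_left)
  also have "(\<Sum>l\<in>L. cis (- pi * real l * a) * (\<Sum>k<2 * N. \<omega> l ^ k))
      = (\<Sum>l\<in>L. if l = r then of_nat (2 * N) * cis (- pi * real r * a) else 0)"
    using assms(1,2) unfolding \<omega>_def r_def
    by (intro sum.cong refl, subst sum_cis_powers_residue) auto
  also have "c / of_nat (2 * N) * \<dots> = (if r \<in> L then c * cis (- pi * real r * a) else 0)"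
    using assms(1) finite_subset[OF assms(2)] by (simp add: sum.delta)
  finally show ?thesis
    using cis_residue_eq[OF assms(1,3)] by (simp add: r_def)
qed

lemma frac_p_eig:
  assumes "N > 0"
  shows "frac (p_eig N j) = of_int (j mod int (2 * N)) / real (2 * N)"
proof -
  have p_eig: "p_eig N j = of_int j / of_int (int (2 * N))"
    using assms by (simp add: p_eig_def hbar_def)
  have j: "of_int j = (of_int (j mod int (2 * N) + int (2 * N) * (j div int (2 * N))) :: real)"
    by (simp only: mod_mult_div_eq)
  have "frac (p_eig N j) = of_int j / real (2 * N) - of_int (j div int (2 * N))"
    unfolding frac_def p_eig floor_divide_of_int_eq by simp
  also have "\<dots> = of_int (j mod int (2 * N)) / real (2 * N)"
    unfolding j using assms by (simp add: field_simps)
  finally show ?thesis .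
qed

lemma frac_p_eig_less_half_iff:
  assumes "N > 0"
  shows "frac (p_eig N j) < 1 / 2 \<longleftrightarrow> nat (j mod int (2 * N)) < N"
proof -
  have "frac (p_eig N j) < 1 / 2 \<longleftrightarrow> of_int (j mod int (2 * N)) < real N"
    using assms by (simp add: frac_p_eig field_simps)
  also have "\<dots> \<longleftrightarrow> j mod int (2 * N) < int N"
    by linarith
  also have "\<dots> \<longleftrightarrow> nat (j mod int (2 * N)) < N"
    using assms by auto
  finally show ?thesis .
qed

lemma Bproj_dirac_comb2:
  assumes "N > 0" "real N * a \<in> \<int>"
  shows "Bproj N (dirac_comb2 c a) = mode_comb N (c / 2) a {..<N}"
  unfolding Bproj_def frac_p_eig_less_half_iff[OF assms(1)]
  using assms
  by (intro the_per2_four2_eq per2_mode_comb finite_supp2_mode_comb)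
     (simp_all add: four2_mode_comb four2_dirac_comb2)

lemma Tproj_dirac_comb2:
  assumes "N > 0" "real N * a \<in> \<int>"
  shows "Tproj N (dirac_comb2 c a) = mode_comb N (c / 2) a {N..<2 * N}"
proof -
  have "nat (j mod int (2 * N)) < 2 * N" for j
    using assms(1) by (simp add: nat_less_iff)
  hence upper: "frac (p_eig N j) \<ge> 1 / 2 \<longleftrightarrow> nat (j mod int (2 * N)) \<in> {N..<2 * N}" for j
    using frac_p_eig_less_half_iff[OF assms(1), of j] by auto
  have "{N..<2 * N} \<subseteq> {..<2 * N}" by auto
  note four2_upper = four2_mode_comb[OF assms(1) this assms(2)]
  show ?thesis
    unfolding Tproj_def upper using assms
    by (intro the_per2_four2_eq per2_mode_comb finite_supp2_mode_comb)
       (simp_all add: four2_upper four2_dirac_comb2)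
qed

lemma mode_comb_upper_half:
  fixes N :: nat and m :: int
  assumes "N > 0"
  defines "a \<equiv> 2 * of_int m / real N"
  shows "mode_comb N c a {N..<2 * N} y = cis (- pi * real N * y) * mode_comb N c a {..<N} y"
proof (cases "y \<in> lattice N")
  case True
  then obtain k where y: "y = of_int k / real N" by (auto simp: lattice_def)
  have "pi * real N * (y - a) - - pi * real N * y = 2 * pi * of_int (k - m)"
    using assms(1) unfolding y a_def by (simp add: field_simps)
  hence "cis (pi * real N * (y - a)) = cis (- pi * real N * y)"
    by (rule cis_eq_cisI)
  moreover have "{N..<2 * N} = (\<lambda>l. l + N) ` {..<N}"
    by (simp add: lessThan_atLeast0 mult_2)
  ultimately show ?thesis by (simp add: mode_comb_image_add)
next
  case False
  thus ?thesis by (simp add: mode_comb_def)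
qed

text \<open>Also for \<open>N = 0\<close>, where \<open>hbar 0 = 0\<close> and division by zero gives 0.\<close>
lemma Xpow_eq: "Xpow N s u = (\<lambda>y. cis (2 * pi * s * real N * y) * u y)"
  by (cases "N = 0") (simp_all add: Xpow_def hbar_def field_simps)

lemma Xpow_1_lattice_supported:
  assumes "N > 0" "\<And>y. u y \<noteq> 0 \<Longrightarrow> y \<in> lattice N"
  shows "Xpow N 1 u = u"
proof
  fix y
  show "Xpow N 1 u y = u y"
  proof (cases "y \<in> lattice N")
    case True
    then obtain k where "y = of_int k / real N" by (auto simp: lattice_def)
    hence "2 * pi * 1 * real N * y = 2 * pi * of_int k"
      using assms(1) by simp
    hence "cis (2 * pi * 1 * real N * y) = 1"
      by (simp only: cis_multiple_2pi Ints_of_int)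
    thus ?thesis by (simp add: Xpow_eq)
  next
    case False
    thus ?thesis using assms(2) by (auto simp: Xpow_eq)
  qed
qed

lemma shift_eq_twisted:
  fixes B T \<sigma> :: "real \<Rightarrow> complex"
  assumes "per2 T" "\<And>y. T y = \<sigma> y * B y" "\<And>y. \<sigma> (y + 1) = \<sigma> y"
    and "\<And>y. B y \<noteq> 0 \<Longrightarrow> \<sigma> y * \<sigma> y = 1"
  shows "B (y + 1) + T y = \<sigma> y * (B y + T (y - 1))"
proof -
  have "T (y - 1) = T (y + 1)"
    using assms(1) unfolding per2_def by (metis diff_add_cancel add.assoc one_add_one)
  hence "\<sigma> y * T (y - 1) = \<sigma> (y + 1) * \<sigma> (y + 1) * B (y + 1)"
    using assms(2,3) by (simp add: mult.assoc)
  also have "\<dots> = B (y + 1)"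
    using assms(4) by (cases "B (y + 1) = 0") auto
  finally show ?thesis
    using assms(2) by (simp add: distrib_left)
qed

lemma frac_half_shift:
  fixes y :: real
  shows "frac ((y + 1) / 2) < 1 / 2 \<longleftrightarrow> \<not> frac (y / 2) < 1 / 2"
proof -
  have "frac (1 / 2 :: real) = 1 / 2"
    by (simp add: frac_unique_iff)
  hence shifted: "frac ((y + 1) / 2)
      = (if frac (y / 2) + 1 / 2 < 1 then frac (y / 2) + 1 / 2 else frac (y / 2) - 1 / 2)"
    using frac_add[of "y / 2" "1 / 2"] by (simp add: add_divide_distrib)
  show ?thesis
  proof (cases "frac (y / 2) < 1 / 2")
    case True
    hence "frac (y / 2) + 1 / 2 < 1" by linarith
    thus ?thesis using True unfolding shifted by (simp add: not_less)
  next
    case False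
    hence "\<not> frac (y / 2) + 1 / 2 < 1" using frac_lt_1[of "y / 2"] by linarith
    thus ?thesis using False unfolding shifted by (simp add: frac_lt_1)
  qed
qed

lemma Ypow_1_Ex_twisted_Ox:
  fixes v \<sigma> :: "real \<Rightarrow> complex"
  assumes \<sigma>_periodic: "\<And>y. \<sigma> (y + 1) = \<sigma> y"
    and \<sigma>_involutive: "\<And>y. v y \<noteq> 0 \<Longrightarrow> \<sigma> y * \<sigma> y = 1"
    and v_shift: "\<And>y. v (y + 1) = \<sigma> y * v y"
  shows "Ypow 1 (\<lambda>y. Ex v y + \<sigma> y * Ox v y) = (\<lambda>y. Ex v y + \<sigma> y * Ox v y)"
proof
  fix y :: real
  note frac_half_shift[of y]
  moreover have "\<sigma> y * (\<sigma> y * v y) = v y"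
    using \<sigma>_involutive by (cases "v y = 0") (auto simp: mult.assoc[symmetric])
  ultimately show "Ypow 1 (\<lambda>y. Ex v y + \<sigma> y * Ox v y) y = Ex v y + \<sigma> y * Ox v y"
    by (auto simp: Ypow_def Ex_def Ox_def \<sigma>_periodic v_shift not_less)
qed

lemma cis_lattice_shift:
  assumes "even N"
  shows "cis (- pi * real N * (y + 1)) = cis (- pi * real N * y)"
proof -
  obtain h where "N = 2 * h" using assms by blast
  thus ?thesis by (intro cis_eq_cisI[of _ _ "- int h"]) (simp add: algebra_simps)
qed

lemma cis_lattice_square:
  assumes "N > 0" "y \<in> lattice N"
  shows "cis (- pi * real N * y) * cis (- pi * real N * y) = 1"
proof -
  obtain k where "y = of_int k / real N" using assms(2) by (auto simp: lattice_def)
  hence "cis (- pi * real N * y) * cis (- pi * real N * y) = cis (2 * pi * of_int (- k))"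
    using assms(1) by (simp add: cis_mult mult.assoc)
  also have "\<dots> = 1" by (rule cis_multiple_2pi) simp
  finally show ?thesis .
qed

text \<open>The comb \<open>(B + Y\<^sup>-\<^sup>1 T) S \<Phi>\<^sub>m\<close>.\<close>
definition BT_S_Phi :: "nat \<Rightarrow> int \<Rightarrow> dm" where
  "BT_S_Phi N m y =
     mode_comb N (of_real (sqrt 2 / sqrt (real N)) / 2) (2 * of_int m / real N) {..<N} y
   + mode_comb N (of_real (sqrt 2 / sqrt (real N)) / 2) (2 * of_int m / real N) {N..<2 * N} (y - 1)"

lemma Fop_Phi_eq:
  assumes "N > 0"
  shows "Fop N (Phi N m)
       = (\<lambda>y. Ex (BT_S_Phi N m) y + cis (- pi * real N * y) * Ox (BT_S_Phi N m) y)"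
proof -
  have "real N * (2 * of_int m / real N) \<in> \<int>"
    using assms by simp
  note projections = Bproj_dirac_comb2[OF assms this] Tproj_dirac_comb2[OF assms this]
  show ?thesis
    unfolding Fop_def Let_def Sdil_Phi_eq_dirac_comb2 projections Xpow_eq Ypow_def
    by (simp add: BT_S_Phi_def[abs_def] mult_ac)
qed

lemma BT_S_Phi_supported:
  assumes "N > 0" "BT_S_Phi N m y \<noteq> 0"
  shows "y \<in> lattice N"
proof (rule ccontr)
  assume "y \<notin> lattice N"
  moreover from this have "y - 1 \<notin> lattice N"
    using lattice_add_of_int_iff[OF assms(1), of "y - 1" 1] by simp
  ultimately show False
    using assms(2) by (simp add: BT_S_Phi_def mode_comb_def)
qed

lemma BT_S_Phi_shift:
  assumes "N > 0" "even N"
  shows "BT_S_Phi N m (y + 1) = cis (- pi * real N * y) * BT_S_Phi N m y"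
proof -
  let ?c = "of_real (sqrt 2 / sqrt (real N)) / 2 :: complex" and ?a = "2 * of_int m / real N"
  have "mode_comb N ?c ?a {..<N} (y + 1) + mode_comb N ?c ?a {N..<2 * N} y
      = cis (- pi * real N * y)
        * (mode_comb N ?c ?a {..<N} y + mode_comb N ?c ?a {N..<2 * N} (y - 1))"
  proof (rule shift_eq_twisted)
    fix x
    show "per2 (mode_comb N ?c ?a {N..<2 * N})"
      using assms(1) by (rule per2_mode_comb)
    show "mode_comb N ?c ?a {N..<2 * N} x = cis (- pi * real N * x) * mode_comb N ?c ?a {..<N} x"
      using assms(1) by (rule mode_comb_upper_half)
    show "cis (- pi * real N * (x + 1)) = cis (- pi * real N * x)"
      using assms(2) by (rule cis_lattice_shift)
    assume "mode_comb N ?c ?a {..<N} x \<noteq> 0"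
    thus "cis (- pi * real N * x) * cis (- pi * real N * x) = 1"
      using assms(1) by (intro cis_lattice_square mode_comb_supported)
  qed
  thus ?thesis by (simp add: BT_S_Phi_def)
qed

lemma Fop_Phi_supported:
  assumes "N > 0" "Fop N (Phi N m) y \<noteq> 0"
  shows "y \<in> lattice N"
  using assms BT_S_Phi_supported[OF assms(1)]
  by (auto simp: Fop_Phi_eq Ex_def Ox_def split: if_splits)

theorem mainTheorem3:
  fixes N :: nat
  assumes "N > 0" and "even N"
  shows "\<forall>m::int. Xpow N 1 (Fop N (Phi N m)) = Fop N (Phi N m)
                 \<and> Ypow 1 (Fop N (Phi N m)) = Fop N (Phi N m)"
proof (intro allI conjI)
  fix m :: int
  show "Xpow N 1 (Fop N (Phi N m)) = Fop N (Phi N m)"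
    using assms(1) Fop_Phi_supported[OF assms(1)] by (rule Xpow_1_lattice_supported)
  show "Ypow 1 (Fop N (Phi N m)) = Fop N (Phi N m)"
    unfolding Fop_Phi_eq[OF assms(1)]
  proof (rule Ypow_1_Ex_twisted_Ox)
    fix y
    show "cis (- pi * real N * (y + 1)) = cis (- pi * real N * y)"
      using assms(2) by (rule cis_lattice_shift)
    show "BT_S_Phi N m (y + 1) = cis (- pi * real N * y) * BT_S_Phi N m y"
      using assms by (rule BT_S_Phi_shift)
    assume "BT_S_Phi N m y \<noteq> 0"
    thus "cis (- pi * real N * y) * cis (- pi * real N * y) = 1"
      using assms(1) by (intro cis_lattice_square BT_S_Phi_supported)
  qed
qed

end
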